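(* Let $D$ be a planar distributive lattice with a fixed planar diagram, and assume $D$ has two distinct join-reducible coatoms $c_\ell$ and $c_r$, with $c_\ell$ to the left of $c_r$. Let $d_\ell$ be the unique element of the left boundary chain $\mathrm{LBound}(D)$ with $d_\ell\prec c_\ell$, and $d_r$ the unique element of the right boundary chain $\mathrm{RBound}(D)$ with $d_r\prec c_r$. Then $1_D=\mathrm{ljsp}(d_\ell)\vee\mathrm{rjsp}(d_r)$.
   Context: A planar lattice is a finite lattice with a fixed Hasse diagram drawn in the plane without crossing edges; its left boundary chain $\mathrm{LBound}(D)$ and right boundary chain $\mathrm{RBound}(D)$ are the maximal chains forming the left and right boundary of the diagram. (In this situation $c_\ell\in\mathrm{LBound}(D)$, $c_r\in\mathrm{RBound}(D)$.) $J_0(D)$ is the set of join-irreducible elements together with $0$. For $x\in D$, the left join support $\mathrm{ljsp}(x)$ is the largest element of $\mathrm{LBound}(D)\cap J_0(D)\cap{\downarrow}x$, and the right join support $\mathrm{rjsp}(x)$ is the largest element of $\mathrm{RBound}(D)\cap J_0(D)\cap{\downarrow}x$, where ${\downarrow}x=\{y: y\le x\}$. *)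

theory Defs
  imports "HOL-Analysis.Analysis"
begin

text \<open>Finite lattices are modelled by a type of class finite, bounded lattice
  (0 = bot, 1 = top). A diagram is a placement of the elements in the plane
  (first coordinate = x, second = height y); the edges are straight segments
  between covering pairs.\<close>

definition covers :: "'a::order \<Rightarrow> 'a \<Rightarrow> bool" (infix "\<lessdot>" 50) where
  "x \<lessdot> y \<longleftrightarrow> x < y \<and> \<not> (\<exists>z. x < z \<and> z < y)"

definition planar_diagram :: "('a::order \<Rightarrow> real \<times> real) \<Rightarrow> bool" where
  "planar_diagram pos \<longleftrightarrow>
     inj pos
   \<and> (\<forall>x y. x \<lessdot> y \<longrightarrow> snd (pos x) < snd (pos y))
   \<and> (\<forall>x y z. x \<lessdot> y \<longrightarrow> pos z \<in> closed_segment (pos x) (pos y) \<longrightarrow> z = x \<or> z = y)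
   \<and> (\<forall>a b c d. a \<lessdot> b \<longrightarrow> c \<lessdot> d \<longrightarrow> (a, b) \<noteq> (c, d) \<longrightarrow>
        closed_segment (pos a) (pos b) \<inter> closed_segment (pos c) (pos d)
          \<subseteq> pos ` ({a, b} \<inter> {c, d}))"

definition is_chain :: "'a::order set \<Rightarrow> bool" where
  "is_chain C \<longleftrightarrow> (\<forall>x\<in>C. \<forall>y\<in>C. x \<le> y \<or> y \<le> x)"

definition maximal_chain :: "'a::order set \<Rightarrow> bool" where
  "maximal_chain C \<longleftrightarrow> is_chain C \<and> (\<forall>D. is_chain D \<longrightarrow> C \<subseteq> D \<longrightarrow> D = C)"

text \<open>cross product of the vectors (b - a) and (p - a): positive iff p lies strictly
  to the left of the line through a and b, directed from a to b.\<close>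
definition cross :: "real \<times> real \<Rightarrow> real \<times> real \<Rightarrow> real \<times> real \<Rightarrow> real" where
  "cross a b p = (fst b - fst a) * (snd p - snd a) - (snd b - snd a) * (fst p - fst a)"

definition strictly_left_of_chain :: "('a::order \<Rightarrow> real \<times> real) \<Rightarrow> 'a set \<Rightarrow> real \<times> real \<Rightarrow> bool" where
  "strictly_left_of_chain pos C p \<longleftrightarrow>
     (\<exists>a\<in>C. \<exists>b\<in>C. a \<lessdot> b \<and> snd (pos a) \<le> snd p \<and> snd p \<le> snd (pos b)
        \<and> cross (pos a) (pos b) p > 0)"

definition strictly_right_of_chain :: "('a::order \<Rightarrow> real \<times> real) \<Rightarrow> 'a set \<Rightarrow> real \<times> real \<Rightarrow> bool" where
  "strictly_right_of_chain pos C p \<longleftrightarrow>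
     (\<exists>a\<in>C. \<exists>b\<in>C. a \<lessdot> b \<and> snd (pos a) \<le> snd p \<and> snd p \<le> snd (pos b)
        \<and> cross (pos a) (pos b) p < 0)"

definition left_boundary :: "('a::order \<Rightarrow> real \<times> real) \<Rightarrow> 'a set \<Rightarrow> bool" where
  "left_boundary pos L \<longleftrightarrow> maximal_chain L \<and> (\<forall>z. \<not> strictly_left_of_chain pos L (pos z))"

definition right_boundary :: "('a::order \<Rightarrow> real \<times> real) \<Rightarrow> 'a set \<Rightarrow> bool" where
  "right_boundary pos R \<longleftrightarrow> maximal_chain R \<and> (\<forall>z. \<not> strictly_right_of_chain pos R (pos z))"

text \<open>Kelly--Rival: x is to the left of y if they are incomparable and x lies
  strictly left of some maximal chain through y.\<close>
definition left_of :: "('a::order \<Rightarrow> real \<times> real) \<Rightarrow> 'a \<Rightarrow> 'a \<Rightarrow> bool" where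
  "left_of pos x y \<longleftrightarrow> \<not> x \<le> y \<and> \<not> y \<le> x \<and>
     (\<exists>C. maximal_chain C \<and> y \<in> C \<and> strictly_left_of_chain pos C (pos x))"

definition join_irreducible :: "'a::bounded_lattice \<Rightarrow> bool" where
  "join_irreducible x \<longleftrightarrow> x \<noteq> bot \<and> (\<forall>a b. x = sup a b \<longrightarrow> x = a \<or> x = b)"

definition join_reducible :: "'a::lattice \<Rightarrow> bool" where
  "join_reducible x \<longleftrightarrow> (\<exists>a b. a < x \<and> b < x \<and> x = sup a b)"

definition J0 :: "'a::bounded_lattice set" where
  "J0 = {x. join_irreducible x} \<union> {bot}"

definition jsp :: "'a::bounded_lattice set \<Rightarrow> 'a \<Rightarrow> 'a" where
  "jsp B x = (GREATEST y. y \<in> B \<and> y \<in> J0 \<and> y \<le> x)"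

definition ljsp :: "'a::bounded_lattice set \<Rightarrow> 'a \<Rightarrow> 'a" where
  "ljsp L x = jsp L x"  \<comment> \<open>L is the left boundary chain\<close>

definition rjsp :: "'a::bounded_lattice set \<Rightarrow> 'a \<Rightarrow> 'a" where
  "rjsp R x = jsp R x"  \<comment> \<open>R is the right boundary chain\<close>

end

theory Submission
  imports Defs
begin

text \<open>In a planar diagram the path of a maximal chain splits the horizontal strip between the
  heights of 0 and 1 into a left and a right part; a segment avoiding the path stays on one side
  (the path is closed, segments are connected), and an edge of the diagram meets the path only in
  shared endpoints. Consequently, if maximal chains A and B agree up to e and y is right of A but
  left of B, descending from y along edges must hit A or B above e.

  Let b be the least element of LBound not below c_r. A lower cover z of b not below c_r lies
  right of LBound, hence right of a maximal chain K through c_r that follows LBound up to the lower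
  cover of b in LBound; moving up along edges outside K then carries b, d_l and finally c_l to the
  right of K, contradicting that c_l is left of c_r. So b is join-irreducible, b \<le> ljsp(d_l) and
  b is not below c_r; symmetrically some a \<le> rjsp(d_r) is not below c_l. If a \<squnion> b < 1, it lies
  below a third coatom, but by distributivity 1 covers at most two elements: a coatom whose edge
  to 1 lies between those of two others would lie above their meet.\<close>

section \<open>Covers and maximal chains\<close>

lemma ex_covers_above:
  fixes x y :: "'a::{finite,order}"
  assumes "x < y"
  shows "\<exists>z. x \<lessdot> z \<and> z \<le> y"
proof -
  obtain m where m: "m \<in> {z. x < z \<and> z \<le> y}" "\<forall>b\<in>{z. x < z \<and> z \<le> y}. b \<le> m \<longrightarrow> m = b"
    using finite_has_minimal[of "{z. x < z \<and> z \<le> y}"] assms by auto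
  have "x \<lessdot> m"
    unfolding covers_def using m by (auto dest: order.strict_trans2)
  then show ?thesis using m by auto
qed

lemma ex_covers_below:
  fixes x y :: "'a::{finite,order}"
  assumes "x < y"
  shows "\<exists>z. x \<le> z \<and> z \<lessdot> y"
proof -
  obtain m where m: "m \<in> {z. x \<le> z \<and> z < y}" "\<forall>b\<in>{z. x \<le> z \<and> z < y}. m \<le> b \<longrightarrow> m = b"
    using finite_has_maximal[of "{z. x \<le> z \<and> z < y}"] assms by auto
  have "m \<lessdot> y"
    unfolding covers_def using m by auto (metis order.strict_iff_not order.trans)
  then show ?thesis using m by auto
qed

lemma covers_le_imp_eq: "u \<lessdot> b \<Longrightarrow> v \<lessdot> b \<Longrightarrow> u \<le> v \<Longrightarrow> u = v"
  unfolding covers_def by (auto simp: less_le)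

lemma coatoms_not_le:
  fixes x y :: "'a::order_top"
  shows "x \<lessdot> top \<Longrightarrow> y \<lessdot> top \<Longrightarrow> x \<noteq> y \<Longrightarrow> \<not> x \<le> y"
  unfolding covers_def by (auto simp: less_le)

lemma sup_coatoms_eq_top:
  fixes x y :: "'a::bounded_lattice_top"
  assumes "x \<lessdot> top" "y \<lessdot> top" "x \<noteq> y"
  shows "sup x y = top"
proof -
  have "x < sup x y"
    using coatoms_not_le[OF assms(2,1)] assms(3) by (simp add: less_le) (metis sup.absorb_iff1)
  then show ?thesis using assms(1) unfolding covers_def using top.not_eq_extremum by blast
qed

lemma join_reducible_ex_lower_cover_not_le:
  fixes x y :: "'a::{finite,lattice}"
  assumes "join_reducible x" "\<not> x \<le> y"
  shows "\<exists>g. g \<lessdot> x \<and> \<not> g \<le> y"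
proof (rule ccontr)
  assume "\<nexists>g. g \<lessdot> x \<and> \<not> g \<le> y"
  then have below: "a \<le> y" if "a < x" for a
    using ex_covers_below[OF that] order.trans by blast
  obtain a b where "a < x" "b < x" "x = sup a b"
    using assms(1) unfolding join_reducible_def by blast
  then show False using below assms(2) by simp
qed

lemma join_irreducible_iff: "join_irreducible x \<longleftrightarrow> x \<noteq> bot \<and> \<not> join_reducible x"
  unfolding join_irreducible_def join_reducible_def
  by (metis sup.cobounded1 sup.cobounded2 order.strict_iff_order)

lemma maximal_chain_comparable:
  "maximal_chain C \<Longrightarrow> x \<in> C \<Longrightarrow> y \<in> C \<Longrightarrow> x \<le> y \<or> y \<le> x"
  unfolding maximal_chain_def is_chain_def by blast

lemma maximal_chain_memI:
  assumes "maximal_chain C" "\<And>c. c \<in> C \<Longrightarrow> z \<le> c \<or> c \<le> z"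
  shows "z \<in> C"
proof -
  have "is_chain (insert z C)"
    using assms maximal_chain_comparable[OF assms(1)] unfolding is_chain_def by blast
  then show ?thesis using assms(1) unfolding maximal_chain_def by blast
qed

lemma maximal_chain_bot: "maximal_chain C \<Longrightarrow> (bot::'a::order_bot) \<in> C"
  by (rule maximal_chain_memI) simp_all

lemma maximal_chain_top: "maximal_chain C \<Longrightarrow> (top::'a::order_top) \<in> C"
  by (rule maximal_chain_memI) simp_all

lemma maximal_chain_covers:
  assumes C: "maximal_chain C" and "a \<in> C" "b \<in> C" "a < b"
    and gap: "\<forall>c\<in>C. \<not> (a < c \<and> c < b)"
  shows "a \<lessdot> b"
  unfolding covers_def
proof (intro conjI notI)
  assume "\<exists>z. a < z \<and> z < b"
  then obtain z where z: "a < z" "z < b" by blast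
  have "z \<in> C"
  proof (rule maximal_chain_memI[OF C])
    fix c assume "c \<in> C"
    then show "z \<le> c \<or> c \<le> z"
      using gap z maximal_chain_comparable[OF C, of c a] maximal_chain_comparable[OF C, of c b] \<open>a \<in> C\<close> \<open>b \<in> C\<close>
      by (metis order.strict_iff_not order.trans)
  qed
  then show False using gap z by blast
qed (fact \<open>a < b\<close>)

lemma maximal_chain_upper_cover:
  fixes C :: "'a::{finite,order_top} set"
  assumes C: "maximal_chain C" and "a \<in> C" "a \<noteq> top"
  shows "\<exists>b\<in>C. a \<lessdot> b"
proof -
  have "top \<in> {c\<in>C. a < c}" using maximal_chain_top[OF C] assms by (simp add: top.not_eq_extremum)
  then obtain b where b: "b \<in> {c\<in>C. a < c}" "\<forall>c\<in>{c\<in>C. a < c}. c \<le> b \<longrightarrow> b = c"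
    using finite_has_minimal[of "{c\<in>C. a < c}"] by auto
  then have "a \<lessdot> b" using maximal_chain_covers[OF C \<open>a \<in> C\<close>] by (auto simp: less_le)
  then show ?thesis using b by auto
qed

lemma maximal_chain_lower_cover:
  fixes C :: "'a::{finite,order_bot} set"
  assumes C: "maximal_chain C" and "a \<in> C" "a \<noteq> bot"
  shows "\<exists>b\<in>C. b \<lessdot> a"
proof -
  have "bot \<in> {c\<in>C. c < a}" using maximal_chain_bot[OF C] assms by (simp add: bot.not_eq_extremum)
  then obtain b where b: "b \<in> {c\<in>C. c < a}" "\<forall>c\<in>{c\<in>C. c < a}. b \<le> c \<longrightarrow> b = c"
    using finite_has_maximal[of "{c\<in>C. c < a}"] by auto
  then have "b \<lessdot> a" using maximal_chain_covers[OF C _ \<open>a \<in> C\<close>] by (auto simp: less_le)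
  then show ?thesis using b by auto
qed

lemma ex_maximal_chain_superset:
  fixes S :: "'a::{finite,order} set"
  assumes "is_chain S"
  shows "\<exists>M. maximal_chain M \<and> S \<subseteq> M"
proof -
  obtain M where M: "M \<in> {D. is_chain D \<and> S \<subseteq> D}"
      "\<forall>D\<in>{D. is_chain D \<and> S \<subseteq> D}. M \<subseteq> D \<longrightarrow> M = D"
    using finite_has_maximal[of "{D. is_chain D \<and> S \<subseteq> D}"] assms by auto
  then have "maximal_chain M" unfolding maximal_chain_def by auto
  then show ?thesis using M by auto
qed

lemma ex_maximal_chain_agreeing_below:
  fixes A :: "'a::{finite,order} set"
  assumes A: "maximal_chain A" and "e \<in> A" "e \<le> y"
  obtains B where "maximal_chain B" "y \<in> B" "A \<inter> {z. z \<le> e} = B \<inter> {z. z \<le> e}"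
proof -
  have "is_chain (insert y (A \<inter> {z. z \<le> e}))"
    using assms maximal_chain_comparable[OF A] unfolding is_chain_def by (auto intro: order.trans)
  then obtain B where B: "maximal_chain B" "insert y (A \<inter> {z. z \<le> e}) \<subseteq> B"
    using ex_maximal_chain_superset by blast
  have "B \<inter> {z. z \<le> e} \<subseteq> A"
  proof
    fix b assume b: "b \<in> B \<inter> {z. z \<le> e}"
    show "b \<in> A"
    proof (rule maximal_chain_memI[OF A])
      fix c assume "c \<in> A"
      then show "b \<le> c \<or> c \<le> b"
        using b B maximal_chain_comparable[OF B(1), of b c] maximal_chain_comparable[OF A \<open>c \<in> A\<close> \<open>e \<in> A\<close>]
        by (auto intro: order.trans)
    qed
  qed
  then show thesis using B that by blast
qed

lemma not_in_maximal_chain_through_coatom: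
  fixes K :: "'a::order_top set"
  assumes "maximal_chain K" "y \<in> K" "y \<lessdot> top" "\<not> w \<le> y" "w < top"
  shows "w \<notin> K"
proof
  assume "w \<in> K"
  then have "y < w" using maximal_chain_comparable[OF assms(1) _ assms(2)] assms(4) by (auto simp: less_le)
  then show False using assms(3,5) unfolding covers_def by blast
qed

lemma le_jsp:
  fixes L :: "'a::{finite,bounded_lattice} set"
  assumes "maximal_chain L" "b \<in> L" "b \<in> J0" "b \<le> d"
  shows "b \<le> jsp L d"
proof -
  let ?S = "{w. w \<in> L \<and> w \<in> J0 \<and> w \<le> d}"
  obtain m where m: "m \<in> ?S" "\<forall>w\<in>?S. m \<le> w \<longrightarrow> m = w"
    using finite_has_maximal[of ?S] assms by auto
  have greatest: "w \<le> m" if "w \<in> ?S" for w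
    using m that maximal_chain_comparable[OF assms(1), of m w] by auto
  have "jsp L d = m" unfolding jsp_def by (rule Greatest_equality) (use m greatest in auto)
  then show ?thesis using greatest assms by auto
qed

section \<open>Lines and segments in the plane\<close>

definition line_x :: "real \<times> real \<Rightarrow> real \<times> real \<Rightarrow> real \<Rightarrow> real" where
  "line_x A B t = fst A + (t - snd A) / (snd B - snd A) * (fst B - fst A)"

lemma line_x_start: "line_x A B (snd A) = fst A"
  by (simp add: line_x_def)

lemma line_x_end: "snd A \<noteq> snd B \<Longrightarrow> line_x A B (snd B) = fst B"
  by (simp add: line_x_def)

lemma cross_eq_line_x: "snd A \<noteq> snd B \<Longrightarrow> cross A B p = (snd B - snd A) * (line_x A B (snd p) - fst p)"
  unfolding cross_def line_x_def by (simp add: field_simps)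

lemma closed_segment_iff_line_x:
  assumes "snd A < snd B"
  shows "p \<in> closed_segment A B \<longleftrightarrow> snd A \<le> snd p \<and> snd p \<le> snd B \<and> fst p = line_x A B (snd p)"
proof
  assume "p \<in> closed_segment A B"
  then obtain u where u: "0 \<le> u" "u \<le> 1" "p = (1 - u) *\<^sub>R A + u *\<^sub>R B"
    unfolding closed_segment_def by auto
  have s: "snd p = snd A + u * (snd B - snd A)" "fst p = fst A + u * (fst B - fst A)"
    by (simp_all add: u(3) algebra_simps)
  have "(snd p - snd A) / (snd B - snd A) = u" using assms s(1) by simp
  then have "line_x A B (snd p) = fst p" unfolding line_x_def using s(2) by simp
  moreover have "snd A \<le> snd p" "snd p \<le> snd B" using s(1) u(1,2) assms
    by (auto intro!: mult_nonneg_nonneg) (smt (verit) mult_left_le_one_le)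
  ultimately show "snd A \<le> snd p \<and> snd p \<le> snd B \<and> fst p = line_x A B (snd p)" by simp
next
  assume H: "snd A \<le> snd p \<and> snd p \<le> snd B \<and> fst p = line_x A B (snd p)"
  define u where "u = (snd p - snd A) / (snd B - snd A)"
  have u: "0 \<le> u" "u \<le> 1" using H assms unfolding u_def by (auto simp: divide_simps)
  have "snd p = snd A + u * (snd B - snd A)" using assms unfolding u_def by simp
  moreover have "fst p = fst A + u * (fst B - fst A)" using H unfolding u_def line_x_def by simp
  ultimately have "p = (1 - u) *\<^sub>R A + u *\<^sub>R B" by (simp add: prod_eq_iff algebra_simps)
  then show "p \<in> closed_segment A B" unfolding closed_segment_def using u by auto
qed

lemma ex_closed_segment_at_height:
  assumes "snd A < snd B" "snd A \<le> t" "t \<le> snd B"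
  shows "\<exists>q\<in>closed_segment A B. snd q = t \<and> fst q = line_x A B t"
  using closed_segment_iff_line_x[OF assms(1), of "(line_x A B t, t)"] assms
  by (auto intro!: bexI[where x = "(line_x A B t, t)"])

lemma closed_segment_snd_bounds:
  fixes p q z :: "real \<times> real"
  assumes "z \<in> closed_segment p q"
  shows "min (snd p) (snd q) \<le> snd z \<and> snd z \<le> max (snd p) (snd q)"
proof -
  obtain u where u: "0 \<le> u" "u \<le> 1" "snd z = (1 - u) * snd p + u * snd q"
    using assms unfolding closed_segment_def by auto
  have "(1-u) * min (snd p) (snd q) \<le> (1-u) * snd p" "u * min (snd p) (snd q) \<le> u * snd q"
       "(1-u) * snd p \<le> (1-u) * max (snd p) (snd q)" "u * snd q \<le> u * max (snd p) (snd q)"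
    using u by (intro mult_left_mono; simp)+
  then show ?thesis unfolding u(3) by (simp add: algebra_simps)
qed

definition mirror :: "real \<times> real \<Rightarrow> real \<times> real" where
  "mirror p = (- fst p, snd p)"

lemma mirror_mirror [simp]: "mirror (mirror p) = p"
  by (simp add: mirror_def)

lemma snd_mirror [simp]: "snd (mirror p) = snd p"
  by (simp add: mirror_def)

lemma inj_mirror: "inj mirror"
  by (metis injI mirror_mirror)

lemma mirror_in_closed_segment_iff:
  "mirror p \<in> closed_segment (mirror a) (mirror b) \<longleftrightarrow> p \<in> closed_segment a b"
proof -
  have "linear mirror" by (rule linearI) (auto simp: mirror_def)
  then show ?thesis by (simp add: closed_segment_linear_image inj_image_mem_iff inj_mirror)
qed

lemma cross_mirror: "cross (mirror a) (mirror b) (mirror p) = - cross a b p"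
  unfolding cross_def mirror_def by (simp add: algebra_simps)

section \<open>Paths of maximal chains in a planar diagram\<close>

lemma maximal_chain_left_boundary: "left_boundary pos L \<Longrightarrow> maximal_chain L"
  unfolding left_boundary_def by blast

locale planar_lattice_diagram =
  fixes pos :: "'a::{finite,bounded_lattice} \<Rightarrow> real \<times> real"
  assumes planar: "planar_diagram pos"
    and nontrivial: "(bot::'a) \<noteq> top"
begin

abbreviation height :: "'a \<Rightarrow> real" where
  "height z \<equiv> snd (pos z)"

definition on_path :: "'a set \<Rightarrow> real \<times> real \<Rightarrow> bool" where
  "on_path C p \<longleftrightarrow> (\<exists>a\<in>C. \<exists>b\<in>C. a \<lessdot> b \<and> p \<in> closed_segment (pos a) (pos b))"

lemma height_less_of_covers: "x \<lessdot> y \<Longrightarrow> height x < height y"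
  using planar unfolding planar_diagram_def by blast

lemma height_strict_mono: "x < y \<Longrightarrow> height x < height y"
proof (induction "card {z. x < z \<and> z < y}" arbitrary: x rule: less_induct)
  case less
  obtain z where z: "x \<lessdot> z" "z \<le> y" using ex_covers_above[OF less.prems] by blast
  show ?case
  proof (cases "z = y")
    case True
    then show ?thesis using height_less_of_covers[OF z(1)] by simp
  next
    case False
    then have "z < y" using z by simp
    moreover have "{w. z < w \<and> w < y} \<subset> {w. x < w \<and> w < y}"
      using z \<open>z < y\<close> unfolding covers_def by (auto intro: less_trans)
    then have "card {w. z < w \<and> w < y} < card {w. x < w \<and> w < y}"
      by (simp add: psubset_card_mono)
    ultimately show ?thesis using less.hyps height_less_of_covers[OF z(1)] by fastforce
  qed
qed

lemma height_bounds: "height bot \<le> height z" "height z \<le> height top"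
  by (metis bot.not_eq_extremum height_strict_mono less_imp_le order_refl,
      metis top.not_eq_extremum height_strict_mono less_imp_le order_refl)

context
  fixes C :: "'a set"
  assumes chain: "maximal_chain C"
begin

lemma chain_le_of_height_le: "a \<in> C \<Longrightarrow> b \<in> C \<Longrightarrow> height a \<le> height b \<Longrightarrow> a \<le> b"
  using maximal_chain_comparable[OF chain, of a b] height_strict_mono[of b a] by (auto simp: less_le)

lemma chain_eq_of_height_eq: "a \<in> C \<Longrightarrow> b \<in> C \<Longrightarrow> height a = height b \<Longrightarrow> a = b"
  using chain_le_of_height_le[of a b] chain_le_of_height_le[of b a] by auto

lemma ex_chain_edge_at_height:
  assumes "height bot \<le> t" "t \<le> height top"
  shows "\<exists>a\<in>C. \<exists>b\<in>C. a \<lessdot> b \<and> height a \<le> t \<and> t \<le> height b"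
proof -
  let ?S = "{c\<in>C. height c \<le> t \<and> c \<noteq> top}"
  have "bot \<in> ?S" using assms nontrivial maximal_chain_bot[OF chain] by auto
  then obtain a where a: "a \<in> ?S" "\<forall>c\<in>?S. a \<le> c \<longrightarrow> a = c"
    using finite_has_maximal[of ?S] by auto
  obtain b where b: "b \<in> C" "a \<lessdot> b" using maximal_chain_upper_cover[OF chain, of a] a by auto
  have "b \<notin> ?S" using a b unfolding covers_def by auto
  then have "t \<le> height b" using b assms(2) by (cases "b = top") auto
  then show ?thesis using a b by auto
qed

lemma chain_vertex_at_edge:
  assumes "v \<in> C" "a \<in> C" "b \<in> C" "a \<lessdot> b" "height a \<le> height v" "height v \<le> height b"
  shows "v = a \<or> v = b"
proof -
  have "a \<le> v" "v \<le> b" using chain_le_of_height_le assms by auto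
  then show ?thesis using assms(4) unfolding covers_def by (auto simp: less_le)
qed

lemma chain_edges_at_height:
  assumes "a \<in> C" "b \<in> C" "a \<lessdot> b" "a' \<in> C" "b' \<in> C" "a' \<lessdot> b'"
    and "height a \<le> t" "t \<le> height b" "height a' \<le> t" "t \<le> height b'"
  shows "(a = a' \<and> b = b') \<or> (b = a' \<and> t = height b) \<or> (b' = a \<and> t = height a)"
proof (cases "b \<le> a'")
  case True
  then have "height b \<le> height a'" using height_strict_mono[of b a'] by (auto simp: less_le)
  then show ?thesis using chain_eq_of_height_eq[of b a'] assms by auto
next
  case b_a': False
  show ?thesis
  proof (cases "b' \<le> a")
    case True
    then have "height b' \<le> height a" using height_strict_mono[of b' a] by (auto simp: less_le)
    then show ?thesis using chain_eq_of_height_eq[of b' a] assms by auto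
  next
    case False
    then have "a < b'" "a' < b"
      using b_a' maximal_chain_comparable[OF chain] assms(1,2,4,5) by (auto simp: less_le)
    then have "a = a'"
      using assms(3,6) maximal_chain_comparable[OF chain, of a a'] assms(1,4)
      unfolding covers_def by (auto simp: less_le)
    moreover have "b \<le> b' \<or> b' \<le> b" using maximal_chain_comparable[OF chain] assms by auto
    ultimately show ?thesis using assms(3,6) unfolding covers_def by (auto simp: less_le)
  qed
qed

lemma chain_edges_line_x_eq:
  assumes "a \<in> C" "b \<in> C" "a \<lessdot> b" "a' \<in> C" "b' \<in> C" "a' \<lessdot> b'"
    and "height a \<le> t" "t \<le> height b" "height a' \<le> t" "t \<le> height b'"
  shows "line_x (pos a) (pos b) t = line_x (pos a') (pos b') t"
  using chain_edges_at_height[OF assms] height_less_of_covers[OF assms(3)] height_less_of_covers[OF assms(6)]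
  by (auto simp: line_x_start line_x_end)

text \<open>At each height the path of C is the graph of a function, so the side of a point can be
  read off from any edge of C spanning its height.\<close>

lemma chain_side_iff:
  assumes ab: "a \<in> C" "b \<in> C" "a \<lessdot> b" "height a \<le> snd p" "snd p \<le> height b"
  shows "strictly_left_of_chain pos C p \<longleftrightarrow> fst p < line_x (pos a) (pos b) (snd p)"
    and "strictly_right_of_chain pos C p \<longleftrightarrow> fst p > line_x (pos a) (pos b) (snd p)"
    and "on_path C p \<longleftrightarrow> fst p = line_x (pos a) (pos b) (snd p)"
proof -
  have same_line: "line_x (pos a') (pos b') (snd p) = line_x (pos a) (pos b) (snd p)"
    if "a' \<in> C" "b' \<in> C" "a' \<lessdot> b'" "height a' \<le> snd p" "snd p \<le> height b'" for a' b'
    using chain_edges_line_x_eq[OF that(1-3) ab(1-3) that(4,5) ab(4,5)] .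
  have cross_pos: "cross (pos a') (pos b') p > 0 \<longleftrightarrow> fst p < line_x (pos a') (pos b') (snd p)"
    and cross_neg: "cross (pos a') (pos b') p < 0 \<longleftrightarrow> fst p > line_x (pos a') (pos b') (snd p)"
    if "a' \<lessdot> b'" for a' b'
    using height_less_of_covers[OF that] cross_eq_line_x[of "pos a'" "pos b'" p]
    by (simp_all add: zero_less_mult_iff mult_less_0_iff)
  show "strictly_left_of_chain pos C p \<longleftrightarrow> fst p < line_x (pos a) (pos b) (snd p)"
    unfolding strictly_left_of_chain_def using same_line cross_pos ab by metis
  show "strictly_right_of_chain pos C p \<longleftrightarrow> fst p > line_x (pos a) (pos b) (snd p)"
    unfolding strictly_right_of_chain_def using same_line cross_neg ab by metis
  have seg: "p \<in> closed_segment (pos a') (pos b') \<longleftrightarrow>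
      height a' \<le> snd p \<and> snd p \<le> height b' \<and> fst p = line_x (pos a') (pos b') (snd p)"
    if "a' \<lessdot> b'" for a' b'
    using closed_segment_iff_line_x[OF height_less_of_covers[OF that]] .
  show "on_path C p \<longleftrightarrow> fst p = line_x (pos a) (pos b) (snd p)"
    unfolding on_path_def using same_line seg ab by metis
qed

lemma chain_side_cases:
  assumes "height bot \<le> snd p" "snd p \<le> height top"
  shows "strictly_left_of_chain pos C p \<or> strictly_right_of_chain pos C p \<or> on_path C p"
proof -
  obtain a b where ab: "a \<in> C" "b \<in> C" "a \<lessdot> b" "height a \<le> snd p" "snd p \<le> height b"
    using ex_chain_edge_at_height[OF assms] by blast
  show ?thesis using chain_side_iff[OF ab] by linarith
qed

lemma chain_sides_disjoint:
  shows "\<not> (strictly_left_of_chain pos C p \<and> strictly_right_of_chain pos C p)"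
    and "\<not> (strictly_left_of_chain pos C p \<and> on_path C p)"
    and "\<not> (strictly_right_of_chain pos C p \<and> on_path C p)"
proof -
  have *: "\<exists>a\<in>C. \<exists>b\<in>C. a \<lessdot> b \<and> height a \<le> snd p \<and> snd p \<le> height b"
    if "strictly_left_of_chain pos C p \<or> strictly_right_of_chain pos C p"
    using that unfolding strictly_left_of_chain_def strictly_right_of_chain_def by blast
  show "\<not> (strictly_left_of_chain pos C p \<and> strictly_right_of_chain pos C p)"
    and "\<not> (strictly_left_of_chain pos C p \<and> on_path C p)"
    and "\<not> (strictly_right_of_chain pos C p \<and> on_path C p)"
    using * chain_side_iff by (metis less_asym less_irrefl)+
qed

lemma on_path_vertex_iff: "on_path C (pos z) \<longleftrightarrow> z \<in> C"
proof
  assume "on_path C (pos z)"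
  then show "z \<in> C" unfolding on_path_def using planar unfolding planar_diagram_def by blast
next
  assume "z \<in> C"
  show "on_path C (pos z)"
  proof (cases "z = top")
    case False
    then obtain b where "b \<in> C" "z \<lessdot> b" using maximal_chain_upper_cover[OF chain \<open>z \<in> C\<close>] by auto
    then show ?thesis unfolding on_path_def using \<open>z \<in> C\<close> by blast
  next
    case True
    then obtain b where "b \<in> C" "b \<lessdot> z"
      using maximal_chain_lower_cover[OF chain \<open>z \<in> C\<close>] nontrivial by auto
    then show ?thesis unfolding on_path_def using \<open>z \<in> C\<close> by blast
  qed
qed

lemma vertex_side_cases:
  "z \<notin> C \<Longrightarrow> strictly_left_of_chain pos C (pos z) \<or> strictly_right_of_chain pos C (pos z)"
  using chain_side_cases[OF height_bounds] on_path_vertex_iff by blast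

lemma vertex_in_chain_no_side:
  "z \<in> C \<Longrightarrow> \<not> strictly_left_of_chain pos C (pos z) \<and> \<not> strictly_right_of_chain pos C (pos z)"
  using on_path_vertex_iff chain_sides_disjoint by blast

lemma edge_meets_path:
  assumes "u \<lessdot> v" "\<not> (u \<in> C \<and> v \<in> C)" "p \<in> closed_segment (pos u) (pos v)" "on_path C p"
  shows "p \<in> pos ` ({u, v} \<inter> C)"
proof -
  obtain a b where ab: "a \<in> C" "b \<in> C" "a \<lessdot> b" "p \<in> closed_segment (pos a) (pos b)"
    using assms(4) unfolding on_path_def by blast
  have "(u, v) \<noteq> (a, b)" using assms(2) ab by auto
  then have "p \<in> pos ` ({u, v} \<inter> {a, b})"
    using planar assms(1,3) ab(3,4) unfolding planar_diagram_def by blast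
  then show ?thesis using ab by blast
qed

text \<open>The points weakly left (right) of the path of C, written as finite unions of closed sets so
  that the connectedness of segments can be applied.\<close>

definition left_region :: "(real \<times> real) set" where
  "left_region = (\<Union>(a, b)\<in>{(a, b). a \<in> C \<and> b \<in> C \<and> a \<lessdot> b}.
     {z. height a \<le> snd z \<and> snd z \<le> height b \<and> fst z \<le> line_x (pos a) (pos b) (snd z)})"

definition right_region :: "(real \<times> real) set" where
  "right_region = (\<Union>(a, b)\<in>{(a, b). a \<in> C \<and> b \<in> C \<and> a \<lessdot> b}.
     {z. height a \<le> snd z \<and> snd z \<le> height b \<and> line_x (pos a) (pos b) (snd z) \<le> fst z})"

lemma closed_left_region: "closed left_region"
  unfolding left_region_def line_x_def split_beta
  by (intro closed_UN ballI closed_Collect_conj closed_Collect_le continuous_intros)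
     (auto dest: height_less_of_covers)

lemma closed_right_region: "closed right_region"
  unfolding right_region_def line_x_def split_beta
  by (intro closed_UN ballI closed_Collect_conj closed_Collect_le continuous_intros)
     (auto dest: height_less_of_covers)

lemma left_region_iff:
  assumes "height bot \<le> snd z" "snd z \<le> height top"
  shows "z \<in> left_region \<longleftrightarrow> strictly_left_of_chain pos C z \<or> on_path C z"
proof -
  have edge_iff: "fst z \<le> line_x (pos a) (pos b) (snd z) \<longleftrightarrow> strictly_left_of_chain pos C z \<or> on_path C z"
    if "a \<in> C" "b \<in> C" "a \<lessdot> b" "height a \<le> snd z" "snd z \<le> height b" for a b
    using chain_side_iff[OF that] by linarith
  show ?thesis
    unfolding left_region_def using edge_iff ex_chain_edge_at_height[OF assms] by auto
qed

lemma right_region_iff: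
  assumes "height bot \<le> snd z" "snd z \<le> height top"
  shows "z \<in> right_region \<longleftrightarrow> strictly_right_of_chain pos C z \<or> on_path C z"
proof -
  have edge_iff: "line_x (pos a) (pos b) (snd z) \<le> fst z \<longleftrightarrow> strictly_right_of_chain pos C z \<or> on_path C z"
    if "a \<in> C" "b \<in> C" "a \<lessdot> b" "height a \<le> snd z" "snd z \<le> height b" for a b
    using chain_side_iff[OF that] by linarith
  show ?thesis
    unfolding right_region_def using edge_iff ex_chain_edge_at_height[OF assms] by auto
qed

lemma segment_off_path_same_side:
  assumes "height bot \<le> snd p" "snd p \<le> height top" "height bot \<le> snd q" "snd q \<le> height top"
    and off_path: "\<forall>z\<in>closed_segment p q. \<not> on_path C z"
  shows "(strictly_left_of_chain pos C p \<longleftrightarrow> strictly_left_of_chain pos C q) \<and>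
         (strictly_right_of_chain pos C p \<longleftrightarrow> strictly_right_of_chain pos C q)"
proof -
  let ?S = "closed_segment p q"
  have in_strip: "height bot \<le> snd z" "snd z \<le> height top" if "z \<in> ?S" for z
    using closed_segment_snd_bounds[OF that] assms(1-4) by linarith+
  have side: "z \<in> left_region \<longleftrightarrow> strictly_left_of_chain pos C z"
    "z \<in> right_region \<longleftrightarrow> strictly_right_of_chain pos C z"
    "strictly_left_of_chain pos C z \<or> strictly_right_of_chain pos C z" if "z \<in> ?S" for z
    using left_region_iff[OF in_strip[OF that]] right_region_iff[OF in_strip[OF that]]
      chain_side_cases[OF in_strip[OF that]] off_path that by blast+
  have "?S \<subseteq> left_region \<union> right_region" and "left_region \<inter> right_region \<inter> ?S = {}"
    using side chain_sides_disjoint(1) by blast+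
  then have "\<not> (left_region \<inter> ?S \<noteq> {} \<and> right_region \<inter> ?S \<noteq> {})"
    using connected_segment[of p q] closed_left_region closed_right_region
    unfolding connected_closed by blast
  moreover have "p \<in> ?S" "q \<in> ?S" by auto
  ultimately show ?thesis using side chain_sides_disjoint(1) by blast
qed

end

lemma edge_off_chain_same_side:
  assumes C: "maximal_chain C" and "u \<lessdot> v" "u \<notin> C" "v \<notin> C"
  shows "(strictly_left_of_chain pos C (pos u) \<longleftrightarrow> strictly_left_of_chain pos C (pos v)) \<and>
         (strictly_right_of_chain pos C (pos u) \<longleftrightarrow> strictly_right_of_chain pos C (pos v))"
  using segment_off_path_same_side[OF C height_bounds height_bounds] edge_meets_path[OF C] assms
  by blast

lemma subsegment_off_path:
  assumes C: "maximal_chain C" and "u \<lessdot> v" "\<not> (u \<in> C \<and> v \<in> C)"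
    and "p \<in> closed_segment (pos u) (pos v)" "q \<in> closed_segment (pos u) (pos v)"
    and "\<forall>w\<in>{u, v} \<inter> C. pos w \<notin> closed_segment p q"
  shows "\<forall>z\<in>closed_segment p q. \<not> on_path C z"
proof (intro ballI notI)
  fix z assume z: "z \<in> closed_segment p q" and "on_path C z"
  have "closed_segment p q \<subseteq> closed_segment (pos u) (pos v)"
    using assms(4,5) by (simp add: closed_segment_subset convex_closed_segment)
  then have "z \<in> pos ` ({u, v} \<inter> C)" using edge_meets_path[OF C assms(2,3)] z \<open>on_path C z\<close> by blast
  then show False using assms(6) z by blast
qed

text \<open>Both chains have the same path up to the height of e.\<close>

lemma agreeing_chains_not_right_and_left:
  assumes A: "maximal_chain A" and B: "maximal_chain B" and "e \<in> A"
    and agree: "A \<inter> {z. z \<le> e} = B \<inter> {z. z \<le> e}" and "snd p \<le> height e"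
  shows "\<not> (strictly_right_of_chain pos A p \<and> strictly_left_of_chain pos B p)"
proof
  assume sides: "strictly_right_of_chain pos A p \<and> strictly_left_of_chain pos B p"
  then obtain a b where ab: "a \<in> A" "b \<in> A" "a \<lessdot> b" "height a \<le> snd p" "snd p \<le> height b"
    unfolding strictly_right_of_chain_def by blast
  show False
  proof (cases "b \<le> e")
    case True
    then have "a \<in> B" "b \<in> B" using agree ab(1-3) unfolding covers_def by auto
    then show False using chain_side_iff[OF B \<open>a \<in> B\<close> \<open>b \<in> B\<close> ab(3-5)] chain_side_iff[OF A ab] sides
      by linarith
  next
    case False
    then have "e < b" using maximal_chain_comparable[OF A \<open>e \<in> A\<close> ab(2)] by (auto simp: less_le)
    moreover have "a \<le> e"
    proof (rule ccontr)
      assume "\<not> a \<le> e"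
      then have "e < a" using maximal_chain_comparable[OF A \<open>e \<in> A\<close> ab(1)] by (auto simp: less_le)
      then show False using height_strict_mono[of e a] assms(5) ab(4) by linarith
    qed
    ultimately have "a = e" using ab(3) unfolding covers_def by (auto simp: less_le)
    then have p_height: "snd p = height e" using ab(4) assms(5) by auto
    have "fst p > fst (pos e)"
      using chain_side_iff(2)[OF A ab] sides \<open>a = e\<close> p_height by (simp add: line_x_start)
    moreover obtain a' b' where ab': "a' \<in> B" "b' \<in> B" "a' \<lessdot> b'" "height a' \<le> snd p" "snd p \<le> height b'"
      using sides unfolding strictly_left_of_chain_def by blast
    have "e \<in> B" using agree \<open>e \<in> A\<close> by blast
    then have "e = a' \<or> e = b'" using chain_vertex_at_edge[OF B _ ab'(1-3)] ab'(4,5) p_height by auto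
    then have "line_x (pos a') (pos b') (snd p) = fst (pos e)"
      using p_height height_less_of_covers[OF ab'(3)] by (auto simp: line_x_start line_x_end)
    then have "fst p < fst (pos e)" using chain_side_iff(1)[OF B ab'] sides by simp
    ultimately show False by simp
  qed
qed

lemma edge_below_agreement_not_right_and_left:
  assumes A: "maximal_chain A" and B: "maximal_chain B" and "e \<in> A"
    and agree: "A \<inter> {z. z \<le> e} = B \<inter> {z. z \<le> e}"
    and w: "w \<lessdot> y" "height w < height e" and "y \<notin> A" "y \<notin> B"
  shows "\<not> (strictly_right_of_chain pos A (pos y) \<and> strictly_left_of_chain pos B (pos y))"
proof
  assume sides: "strictly_right_of_chain pos A (pos y) \<and> strictly_left_of_chain pos B (pos y)"
  then have "height e < height y"
    using agreeing_chains_not_right_and_left[OF A B \<open>e \<in> A\<close> agree, of "pos y"] by linarith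
  then obtain q where q: "q \<in> closed_segment (pos w) (pos y)" "snd q = height e"
    using ex_closed_segment_at_height[OF height_less_of_covers[OF w(1)], of "height e"] w(2) by auto
  have "pos w \<notin> closed_segment q (pos y)"
    using closed_segment_snd_bounds[of "pos w" q "pos y"] q(2) w(2) \<open>height e < height y\<close> by auto
  then have "\<forall>z\<in>closed_segment q (pos y). \<not> on_path A z" "\<forall>z\<in>closed_segment q (pos y). \<not> on_path B z"
    using subsegment_off_path[OF A w(1) _ q(1) ends_in_segment(2)]
      subsegment_off_path[OF B w(1) _ q(1) ends_in_segment(2)] \<open>y \<notin> A\<close> \<open>y \<notin> B\<close> by blast+
  moreover have "height bot \<le> snd q" "snd q \<le> height top" using height_bounds[of e] q(2) by auto
  ultimately have "strictly_right_of_chain pos A q" "strictly_left_of_chain pos B q"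
    using segment_off_path_same_side[OF A _ _ height_bounds] segment_off_path_same_side[OF B _ _ height_bounds]
      sides by blast+
  then show False using agreeing_chains_not_right_and_left[OF A B \<open>e \<in> A\<close> agree, of q] q(2) by simp
qed

text \<open>Descend from y along lower covers: the sides can only change at A or B, and as long as
  the descending edge does not pass below e it cannot pass between the two chains.\<close>

lemma ex_vertex_between_agreeing_chains:
  assumes A: "maximal_chain A" and B: "maximal_chain B" and "e \<in> A"
    and agree: "A \<inter> {z. z \<le> e} = B \<inter> {z. z \<le> e}"
  shows "strictly_right_of_chain pos A (pos y) \<Longrightarrow> strictly_left_of_chain pos B (pos y)
     \<Longrightarrow> \<exists>v\<in>A \<union> B. e \<le> v \<and> v < y"
proof (induction "card {z. z < y}" arbitrary: y rule: less_induct)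
  case less
  have "e \<in> B" using agree \<open>e \<in> A\<close> by blast
  have "y \<notin> A" "y \<notin> B"
    using vertex_in_chain_no_side[OF A] vertex_in_chain_no_side[OF B] less.prems by blast+
  then have "y \<noteq> bot" using maximal_chain_bot[OF A] by auto
  then obtain w where w: "w \<lessdot> y" using ex_covers_below[of bot y] by (auto simp: bot.not_eq_extremum)
  show ?case
  proof (cases "w \<in> A \<union> B")
    case True
    moreover have "\<not> w < e"
      using edge_below_agreement_not_right_and_left[OF A B \<open>e \<in> A\<close> agree w _ \<open>y \<notin> A\<close> \<open>y \<notin> B\<close>]
        height_strict_mono less.prems by blast
    ultimately have "e \<le> w"
      using maximal_chain_comparable[OF A _ \<open>e \<in> A\<close>] maximal_chain_comparable[OF B _ \<open>e \<in> B\<close>]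
      by (auto simp: less_le)
    then show ?thesis using \<open>w \<in> A \<union> B\<close> w unfolding covers_def by auto
  next
    case False
    then have "strictly_right_of_chain pos A (pos w)" "strictly_left_of_chain pos B (pos w)"
      using edge_off_chain_same_side[OF A w] edge_off_chain_same_side[OF B w] \<open>y \<notin> A\<close> \<open>y \<notin> B\<close> less.prems
      by blast+
    moreover have "card {z. z < w} < card {z. z < y}"
      by (rule psubset_card_mono) (use w in \<open>auto simp: covers_def intro: less_trans\<close>)
    ultimately obtain v where "v \<in> A \<union> B" "e \<le> v" "v < w" using less.hyps by blast
    then show ?thesis using w unfolding covers_def by (auto intro: less_trans)
  qed
qed

lemma coatom_side_iff_line_x:
  assumes x: "x \<lessdot> top" and y: "y \<lessdot> top" and "x \<noteq> y" and Y: "maximal_chain Y" "y \<in> Y"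
    and t: "height x < t" "height y < t" "t < height top"
  shows "strictly_left_of_chain pos Y (pos x) \<longleftrightarrow> line_x (pos x) (pos top) t < line_x (pos y) (pos top) t"
    and "strictly_right_of_chain pos Y (pos x) \<longleftrightarrow> line_x (pos x) (pos top) t > line_x (pos y) (pos top) t"
proof -
  have "x \<notin> Y"
    using not_in_maximal_chain_through_coatom[OF Y(1,2) y coatoms_not_le[OF x y \<open>x \<noteq> y\<close>]] x
    unfolding covers_def by blast
  have "height x \<le> t" "t \<le> height top" using t by auto
  then obtain q where q: "q \<in> closed_segment (pos x) (pos top)" "snd q = t" "fst q = line_x (pos x) (pos top) t"
    using ex_closed_segment_at_height[OF height_less_of_covers[OF x]] by blast
  have "pos top \<notin> closed_segment (pos x) q"
    using closed_segment_snd_bounds[of "pos top" "pos x" q] q(2) t by auto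
  then have "\<forall>z\<in>closed_segment (pos x) q. \<not> on_path Y z"
    using subsegment_off_path[OF Y(1) x _ ends_in_segment(1) q(1)] \<open>x \<notin> Y\<close> by blast
  moreover have "height bot \<le> snd q" "snd q \<le> height top" using q(2) t height_bounds[of x] by auto
  ultimately have same_side: "(strictly_left_of_chain pos Y (pos x) \<longleftrightarrow> strictly_left_of_chain pos Y q) \<and>
      (strictly_right_of_chain pos Y (pos x) \<longleftrightarrow> strictly_right_of_chain pos Y q)"
    using segment_off_path_same_side[OF Y(1) height_bounds[of x]] by blast
  have "height y \<le> snd q" "snd q \<le> height top" using q(2) t by auto
  note q_side = chain_side_iff[OF Y(1) Y(2) maximal_chain_top[OF Y(1)] y this]
  show "strictly_left_of_chain pos Y (pos x) \<longleftrightarrow> line_x (pos x) (pos top) t < line_x (pos y) (pos top) t"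
    using same_side q_side(1) q by simp
  show "strictly_right_of_chain pos Y (pos x) \<longleftrightarrow> line_x (pos x) (pos top) t > line_x (pos y) (pos top) t"
    using same_side q_side(2) q by simp
qed

lemma coatom_lines_differ:
  assumes "x \<lessdot> top" "y \<lessdot> top" "x \<noteq> y" "height x < t" "height y < t" "t < height top"
  shows "line_x (pos x) (pos top) t \<noteq> line_x (pos y) (pos top) t"
proof -
  obtain Y where Y: "maximal_chain Y" "y \<in> Y"
    using ex_maximal_chain_superset[of "{y}"] unfolding is_chain_def by auto
  have "x \<notin> Y"
    using not_in_maximal_chain_through_coatom[OF Y assms(2) coatoms_not_le[OF assms(1-3)]] assms(1)
    unfolding covers_def by blast
  then show ?thesis
    using vertex_side_cases[OF Y(1) \<open>x \<notin> Y\<close>] coatom_side_iff_line_x[OF assms(1-3) Y assms(4-6)] by auto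
qed

lemma coatom_left_of_every_chain:
  assumes x: "x \<lessdot> top" and y: "y \<lessdot> top" and "left_of pos x y"
  shows "maximal_chain K \<Longrightarrow> y \<in> K \<Longrightarrow> strictly_left_of_chain pos K (pos x)"
    and "maximal_chain K \<Longrightarrow> x \<in> K \<Longrightarrow> strictly_right_of_chain pos K (pos y)"
proof -
  obtain C where C: "maximal_chain C" "y \<in> C" "strictly_left_of_chain pos C (pos x)"
    using assms(3) unfolding left_of_def by blast
  have "x \<noteq> y" using assms(3) unfolding left_of_def by auto
  define t where "t = (max (height x) (height y) + height top) / 2"
  have t: "height x < t" "height y < t" "t < height top"
    using height_less_of_covers[OF x] height_less_of_covers[OF y] unfolding t_def by auto
  have order: "line_x (pos x) (pos top) t < line_x (pos y) (pos top) t"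
    using coatom_side_iff_line_x(1)[OF x y \<open>x \<noteq> y\<close> C(1,2) t] C(3) by simp
  show "strictly_left_of_chain pos K (pos x)" if "maximal_chain K" "y \<in> K"
    using coatom_side_iff_line_x(1)[OF x y \<open>x \<noteq> y\<close> that t] order by simp
  show "strictly_right_of_chain pos K (pos y)" if "maximal_chain K" "x \<in> K"
    using coatom_side_iff_line_x(2)[OF y x \<open>x \<noteq> y\<close>[symmetric] that t(2,1,3)] order by simp
qed

lemma right_of_chain_along_chain:
  assumes K: "maximal_chain K" and M: "maximal_chain M" and "b \<in> M" "w \<in> M" "b \<le> w"
    and off_K: "\<And>u. b \<le> u \<Longrightarrow> u \<le> w \<Longrightarrow> u \<notin> K"
    and "strictly_right_of_chain pos K (pos b)"
  shows "strictly_right_of_chain pos K (pos w)"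
  using \<open>w \<in> M\<close> \<open>b \<le> w\<close> off_K
proof (induction "card {z. z < w}" arbitrary: w rule: less_induct)
  case less
  show ?case
  proof (cases "w = b")
    case True
    then show ?thesis using assms(7) by simp
  next
    case False
    then have "b < w" using less.prems by auto
    then obtain w' where w': "w' \<in> M" "w' \<lessdot> w"
      using maximal_chain_lower_cover[OF M less.prems(1)] by fastforce
    have "b \<le> w'"
      using maximal_chain_comparable[OF M w'(1) \<open>b \<in> M\<close>] \<open>b < w\<close> w'(2) unfolding covers_def
      by (auto simp: less_le)
    moreover have "card {z. z < w'} < card {z. z < w}"
      by (rule psubset_card_mono) (use w'(2) in \<open>auto simp: covers_def intro: less_trans\<close>)
    moreover have "w' \<le> w" using w'(2) by (simp add: covers_def less_imp_le)
    ultimately have "strictly_right_of_chain pos K (pos w')"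
      using less.hyps[OF _ w'(1) \<open>b \<le> w'\<close>] less.prems(3) order.trans by blast
    moreover have "w' \<notin> K" "w \<notin> K" using less.prems(2,3) \<open>b \<le> w'\<close> \<open>w' \<le> w\<close> by auto
    ultimately show ?thesis using edge_off_chain_same_side[OF K w'(2)] by simp
  qed
qed

section \<open>Join-irreducible elements on the left boundary\<close>

lemma lower_cover_right_of_agreeing_chain:
  assumes L: "left_boundary pos L" and K: "maximal_chain K" and "e \<in> L"
    and agree: "L \<inter> {z. z \<le> e} = K \<inter> {z. z \<le> e}"
    and "e \<lessdot> u" "g \<lessdot> u" "g \<noteq> e" "g \<notin> K"
  shows "strictly_right_of_chain pos K (pos g)"
proof -
  have mL: "maximal_chain L" using maximal_chain_left_boundary[OF L] .
  have "g \<notin> L"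
    using maximal_chain_comparable[OF mL _ \<open>e \<in> L\<close>, of g] \<open>g \<noteq> e\<close>
      covers_le_imp_eq[OF \<open>g \<lessdot> u\<close> \<open>e \<lessdot> u\<close>] covers_le_imp_eq[OF \<open>e \<lessdot> u\<close> \<open>g \<lessdot> u\<close>] by auto
  then have "strictly_right_of_chain pos L (pos g)"
    using vertex_side_cases[OF mL] L unfolding left_boundary_def by blast
  have "\<not> strictly_left_of_chain pos K (pos g)"
  proof
    assume "strictly_left_of_chain pos K (pos g)"
    then obtain v where "e \<le> v" "v < g"
      using ex_vertex_between_agreeing_chains[OF mL K \<open>e \<in> L\<close> agree]
        \<open>strictly_right_of_chain pos L (pos g)\<close> by blast
    then show False using \<open>g \<lessdot> u\<close> \<open>e \<lessdot> u\<close> unfolding covers_def by (meson le_less_trans)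
  qed
  then show ?thesis using vertex_side_cases[OF K \<open>g \<notin> K\<close>] by blast
qed

context
  fixes L :: "'a set" and x y d :: 'a
  assumes left_boundary: "left_boundary pos L"
    and x: "x \<lessdot> top" and y: "y \<lessdot> top"
    and x_left: "\<And>K. maximal_chain K \<Longrightarrow> y \<in> K \<Longrightarrow> strictly_left_of_chain pos K (pos x)"
    and d: "d \<in> L" "d \<lessdot> x"
begin

lemma lower_cover_of_coatom_not_le:
  assumes "join_reducible x"
  shows "\<not> d \<le> y"
proof
  assume "d \<le> y"
  obtain K where K: "maximal_chain K" "y \<in> K" "L \<inter> {z. z \<le> d} = K \<inter> {z. z \<le> d}"
    using ex_maximal_chain_agreeing_below[OF maximal_chain_left_boundary[OF left_boundary] d(1) \<open>d \<le> y\<close>] .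
  then have "x \<noteq> y" using x_left vertex_in_chain_no_side by blast
  then have "\<not> x \<le> y" using coatoms_not_le[OF x y] by blast
  then obtain g where g: "g \<lessdot> x" "\<not> g \<le> y"
    using join_reducible_ex_lower_cover_not_le[OF assms] by blast
  have "x < top" "g < top" using x g(1) unfolding covers_def by auto
  then have "g \<notin> K" "x \<notin> K"
    using not_in_maximal_chain_through_coatom[OF K(1,2) y] g(2) \<open>\<not> x \<le> y\<close> by auto
  moreover have "g \<noteq> d" using g(2) \<open>d \<le> y\<close> by blast
  ultimately have "strictly_right_of_chain pos K (pos g)"
    using lower_cover_right_of_agreeing_chain[OF left_boundary K(1) d(1) K(3) d(2) g(1)] by blast
  then have "strictly_right_of_chain pos K (pos x)"
    using edge_off_chain_same_side[OF K(1) g(1) \<open>g \<notin> K\<close> \<open>x \<notin> K\<close>] by blast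
  then show False using x_left[OF K(1,2)] chain_sides_disjoint(1)[OF K(1)] by blast
qed

text \<open>A lower cover z of b not below y would lie right of a maximal chain through y that follows L up
  to the lower cover of b in L; moving up along L from b to d and then to x would put x right of
  that chain.\<close>

lemma lower_cover_of_least_not_le:
  assumes "b \<in> L" "\<not> b \<le> y" "b \<le> d" and least: "\<And>u. u \<in> L \<Longrightarrow> \<not> u \<le> y \<Longrightarrow> b \<le> u"
    and z: "z \<lessdot> b"
  shows "z \<le> y"
proof (rule ccontr)
  assume "\<not> z \<le> y"
  have L: "maximal_chain L" using maximal_chain_left_boundary[OF left_boundary] .
  have "b \<noteq> bot" using \<open>\<not> b \<le> y\<close> by auto
  then obtain e where e: "e \<in> L" "e \<lessdot> b" using maximal_chain_lower_cover[OF L \<open>b \<in> L\<close>] by blast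
  then have "e \<le> y" using least unfolding covers_def by (auto dest: leD)
  then obtain K where K: "maximal_chain K" "y \<in> K" "L \<inter> {u. u \<le> e} = K \<inter> {u. u \<le> e}"
    using ex_maximal_chain_agreeing_below[OF L e(1)] by blast
  have "d < top" using d(2) x unfolding covers_def by (auto intro: less_trans)
  have off_K: "u \<notin> K" if "b \<le> u" "u \<le> d" for u
  proof -
    have "\<not> u \<le> y" using that(1) \<open>\<not> b \<le> y\<close> by (metis order.trans)
    moreover have "u < top" using that(2) \<open>d < top\<close> by (rule le_less_trans)
    ultimately show ?thesis using not_in_maximal_chain_through_coatom[OF K(1,2) y] by blast
  qed
  have "z < top" using z \<open>b \<le> d\<close> \<open>d < top\<close> unfolding covers_def by (metis less_le_trans less_trans)
  then have "z \<notin> K" using not_in_maximal_chain_through_coatom[OF K(1,2) y \<open>\<not> z \<le> y\<close>] by blast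
  moreover have "z \<noteq> e" using \<open>\<not> z \<le> y\<close> \<open>e \<le> y\<close> by blast
  ultimately have "strictly_right_of_chain pos K (pos z)"
    using lower_cover_right_of_agreeing_chain[OF left_boundary K(1) e(1) K(3) e(2) z] by blast
  then have "strictly_right_of_chain pos K (pos b)"
    using edge_off_chain_same_side[OF K(1) z \<open>z \<notin> K\<close> off_K[OF order.refl \<open>b \<le> d\<close>]] by blast
  then have "strictly_right_of_chain pos K (pos d)"
    using right_of_chain_along_chain[OF K(1) L \<open>b \<in> L\<close> d(1) \<open>b \<le> d\<close> off_K] by blast
  moreover have "x \<notin> K"
    using not_in_maximal_chain_through_coatom[OF K(1,2) y] x \<open>\<not> b \<le> y\<close> \<open>b \<le> d\<close> d(2)
    unfolding covers_def by (metis less_imp_le order.trans)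
  ultimately have "strictly_right_of_chain pos K (pos x)"
    using edge_off_chain_same_side[OF K(1) d(2) off_K[OF \<open>b \<le> d\<close> order.refl]] by blast
  then show False using x_left[OF K(1,2)] chain_sides_disjoint(1)[OF K(1)] by blast
qed

lemma ex_join_irreducible_left_boundary:
  assumes "join_reducible x"
  shows "\<exists>b\<in>L. b \<in> J0 \<and> b \<le> d \<and> \<not> b \<le> y"
proof -
  let ?T = "{u\<in>L. \<not> u \<le> y}"
  have "d \<in> ?T" using d(1) lower_cover_of_coatom_not_le[OF assms] by simp
  then obtain b where b: "b \<in> ?T" "\<forall>u\<in>?T. u \<le> b \<longrightarrow> b = u"
    using finite_has_minimal[OF finite, of ?T] by blast
  have least: "b \<le> u" if "u \<in> L" "\<not> u \<le> y" for u
    using b that maximal_chain_comparable[OF maximal_chain_left_boundary[OF left_boundary], of b u] by auto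
  have "b \<in> L" "\<not> b \<le> y" "b \<le> d" using b(1) least \<open>d \<in> ?T\<close> by auto
  then have "\<not> join_reducible b"
    using join_reducible_ex_lower_cover_not_le lower_cover_of_least_not_le least by blast
  then show ?thesis using \<open>b \<in> L\<close> \<open>\<not> b \<le> y\<close> \<open>b \<le> d\<close> join_irreducible_iff unfolding J0_def by auto
qed

end

end

section \<open>Reflected diagrams\<close>

lemma planar_diagram_mirror:
  assumes planar: "planar_diagram pos"
  shows "planar_diagram (\<lambda>z. mirror (pos z))"
  unfolding planar_diagram_def
proof (intro conjI allI impI)
  show "inj (\<lambda>z. mirror (pos z))"
    using inj_compose[OF inj_mirror, of pos] planar unfolding planar_diagram_def comp_def by blast
  show "snd (mirror (pos x)) < snd (mirror (pos y))" if "x \<lessdot> y" for x y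
    using planar that unfolding planar_diagram_def by simp
  show "z = x \<or> z = y" if "x \<lessdot> y" "mirror (pos z) \<in> closed_segment (mirror (pos x)) (mirror (pos y))" for x y z
    using planar that unfolding planar_diagram_def mirror_in_closed_segment_iff by blast
  show "closed_segment (mirror (pos a)) (mirror (pos b)) \<inter> closed_segment (mirror (pos c)) (mirror (pos d))
        \<subseteq> (\<lambda>z. mirror (pos z)) ` ({a, b} \<inter> {c, d})"
    if "a \<lessdot> b" "c \<lessdot> d" "(a, b) \<noteq> (c, d)" for a b c d
  proof
    fix w
    assume "w \<in> closed_segment (mirror (pos a)) (mirror (pos b)) \<inter> closed_segment (mirror (pos c)) (mirror (pos d))"
    then have "mirror w \<in> closed_segment (pos a) (pos b) \<inter> closed_segment (pos c) (pos d)"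
      using mirror_in_closed_segment_iff[of "mirror w"] by simp
    then have "mirror w \<in> pos ` ({a, b} \<inter> {c, d})" using planar that unfolding planar_diagram_def by blast
    then obtain e where e: "e \<in> {a, b} \<inter> {c, d}" "mirror w = pos e" by blast
    then have "w = mirror (pos e)" by (metis mirror_mirror)
    then show "w \<in> (\<lambda>z. mirror (pos z)) ` ({a, b} \<inter> {c, d})" using e(1) by blast
  qed
qed

lemma strictly_left_of_chain_mirror:
  "strictly_left_of_chain (\<lambda>z. mirror (pos z)) C (mirror p) \<longleftrightarrow> strictly_right_of_chain pos C p"
  unfolding strictly_left_of_chain_def strictly_right_of_chain_def cross_mirror by simp

lemma left_boundary_mirror: "right_boundary pos R \<Longrightarrow> left_boundary (\<lambda>z. mirror (pos z)) R"
  unfolding right_boundary_def left_boundary_def by (simp add: strictly_left_of_chain_mirror)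

context planar_lattice_diagram
begin

lemma ex_join_irreducible_right_boundary:
  assumes "right_boundary pos R" "x \<lessdot> top" "y \<lessdot> top"
    and "\<And>K. maximal_chain K \<Longrightarrow> y \<in> K \<Longrightarrow> strictly_right_of_chain pos K (pos x)"
    and "join_reducible x" "d \<in> R" "d \<lessdot> x"
  shows "\<exists>a\<in>R. a \<in> J0 \<and> a \<le> d \<and> \<not> a \<le> y"
proof -
  interpret mirrored: planar_lattice_diagram "\<lambda>z. mirror (pos z)"
    using planar_diagram_mirror[OF planar] nontrivial by unfold_locales
  show ?thesis
    using mirrored.ex_join_irreducible_left_boundary[OF left_boundary_mirror[OF assms(1)] assms(2,3) _ assms(6,7,5)]
      assms(4) by (simp add: strictly_left_of_chain_mirror)
qed

end

section \<open>Coatoms of a planar distributive lattice\<close>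

locale planar_distrib_lattice_diagram = planar_lattice_diagram pos
  for pos :: "'a::{finite,distrib_lattice,bounded_lattice} \<Rightarrow> real \<times> real"
begin

text \<open>If the edge from y to 1 lay between those from x and from z, then y would lie right of a
  chain through x \<sqinter> z and x and left of a chain through z that agrees with it up to x \<sqinter> z, hence
  y \<ge> x \<sqinter> z; by distributivity y = (y \<squnion> x) \<sqinter> (y \<squnion> z) = 1.\<close>

lemma coatom_not_between_coatoms:
  assumes x: "x \<lessdot> top" and y: "y \<lessdot> top" and z: "z \<lessdot> top" and "x \<noteq> y" "y \<noteq> z"
    and t: "height x < t" "height y < t" "height z < t" "t < height top"
    and order: "line_x (pos x) (pos top) t < line_x (pos y) (pos top) t"
      "line_x (pos y) (pos top) t < line_x (pos z) (pos top) t"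
  shows False
proof -
  define e where "e = inf x z"
  have "\<not> e \<le> y"
  proof
    assume "e \<le> y"
    then have "y = sup y (inf x z)" by (simp add: e_def sup.absorb1)
    also have "\<dots> = inf (sup y x) (sup y z)" by (rule sup_inf_distrib1)
    also have "\<dots> = top" using sup_coatoms_eq_top[OF y x \<open>x \<noteq> y\<close>[symmetric]] sup_coatoms_eq_top[OF y z \<open>y \<noteq> z\<close>] by simp
    finally show False using y unfolding covers_def by simp
  qed
  have "is_chain {e, x}" unfolding is_chain_def e_def by simp
  then obtain A where A: "maximal_chain A" "e \<in> A" "x \<in> A" using ex_maximal_chain_superset by blast
  have "e \<le> z" unfolding e_def by simp
  then obtain B where B: "maximal_chain B" "z \<in> B" "A \<inter> {w. w \<le> e} = B \<inter> {w. w \<le> e}"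
    using ex_maximal_chain_agreeing_below[OF A(1,2)] by blast
  have "strictly_right_of_chain pos A (pos y)"
    using coatom_side_iff_line_x(2)[OF y x \<open>x \<noteq> y\<close>[symmetric] A(1,3) t(2,1,4)] order(1) by simp
  moreover have "strictly_left_of_chain pos B (pos y)"
    using coatom_side_iff_line_x(1)[OF y z \<open>y \<noteq> z\<close> B(1,2) t(2,3,4)] order(2) by simp
  ultimately obtain v where "e \<le> v" "v < y"
    using ex_vertex_between_agreeing_chains[OF A(1) B(1) A(2) B(3)] by blast
  then show False using \<open>\<not> e \<le> y\<close> by simp
qed

lemma at_most_two_coatoms:
  fixes x y z :: 'a
  assumes "x \<lessdot> top" "y \<lessdot> top" "z \<lessdot> top"
  shows "x = y \<or> y = z \<or> x = z"
proof (rule ccontr)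
  assume "\<not> (x = y \<or> y = z \<or> x = z)"
  then have distinct: "x \<noteq> y" "y \<noteq> z" "x \<noteq> z" "y \<noteq> x" "z \<noteq> y" "z \<noteq> x" by auto
  define t where "t = (max (max (height x) (height y)) (height z) + height top) / 2"
  have t: "height x < t" "height y < t" "height z < t" "t < height top"
    using height_less_of_covers[OF assms(1)] height_less_of_covers[OF assms(2)]
      height_less_of_covers[OF assms(3)] unfolding t_def by auto
  let ?l = "\<lambda>w. line_x (pos w) (pos top) t"
  have between: "\<not> (?l u < ?l v \<and> ?l v < ?l w)"
    if "u \<lessdot> top" "v \<lessdot> top" "w \<lessdot> top" "u \<noteq> v" "v \<noteq> w" "height u < t" "height v < t" "height w < t"
    for u v w
    using coatom_not_between_coatoms[OF that t(4)] by blast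
  have "?l x \<noteq> ?l y" "?l y \<noteq> ?l z" "?l x \<noteq> ?l z"
    using coatom_lines_differ[OF assms(1,2) _ t(1,2,4)] coatom_lines_differ[OF assms(2,3) _ t(2,3,4)]
      coatom_lines_differ[OF assms(1,3) _ t(1,3,4)] distinct by auto
  then show False
    using between[OF assms(1,2,3) distinct(1,2) t(1,2,3)] between[OF assms(3,2,1) distinct(5,4) t(3,2,1)]
      between[OF assms(2,1,3) distinct(4,3) t(2,1,3)] between[OF assms(3,1,2) distinct(6,1) t(3,1,2)]
      between[OF assms(1,3,2) distinct(3,5) t(1,3,2)] between[OF assms(2,3,1) distinct(2,6) t(2,3,1)]
    by argo
qed

end

theorem lemma2p1:
  fixes pos :: "'a::{finite, distrib_lattice, bounded_lattice} \<Rightarrow> real \<times> real"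
    and L R :: "'a set" and c_l c_r d_l d_r :: 'a
  assumes "planar_diagram pos"
    and "left_boundary pos L" and "right_boundary pos R"
    and "c_l \<lessdot> top" and "c_r \<lessdot> top" and "c_l \<noteq> c_r"
    and "join_reducible c_l" and "join_reducible c_r"
    and "left_of pos c_l c_r"
    and "d_l \<in> L" and "d_l \<lessdot> c_l"
    and "d_r \<in> R" and "d_r \<lessdot> c_r"
  shows "top = sup (ljsp L d_l) (rjsp R d_r)"
proof -
  have "(bot::'a) \<noteq> top" using \<open>c_l \<lessdot> top\<close> bot.extremum_strict unfolding covers_def by metis
  then interpret planar_distrib_lattice_diagram pos
    using \<open>planar_diagram pos\<close> by unfold_locales
  obtain b where b: "b \<in> L" "b \<in> J0" "b \<le> d_l" "\<not> b \<le> c_r"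
    using ex_join_irreducible_left_boundary[OF assms(2,4,5) coatom_left_of_every_chain(1)[OF assms(4,5,9)]
        assms(10,11,7)] by blast
  obtain a where a: "a \<in> R" "a \<in> J0" "a \<le> d_r" "\<not> a \<le> c_l"
    using ex_join_irreducible_right_boundary[OF assms(3,5,4) coatom_left_of_every_chain(2)[OF assms(4,5,9)]
        assms(8,12,13)] by blast
  have "sup a b = top"
  proof (rule ccontr)
    assume "sup a b \<noteq> top"
    then obtain k where "sup a b \<le> k" "k \<lessdot> top"
      using ex_covers_below[of "sup a b" top] by (auto simp: top.not_eq_extremum)
    then show False using at_most_two_coatoms[OF \<open>k \<lessdot> top\<close> assms(4,5)] a(4) b(4) assms(6) by auto
  qed
  moreover have "b \<le> ljsp L d_l" "a \<le> rjsp R d_r"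
    using le_jsp[OF _ b(1-3)] le_jsp[OF _ a(1-3)] assms(2,3)
    unfolding ljsp_def rjsp_def left_boundary_def right_boundary_def by auto
  ultimately show ?thesis by (metis sup.mono sup_commute top.extremum_unique)
qed

end
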